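(* Let $(X,\sigma,\tau)$ be a separable, chronologically dense Lorentzian metric space satisfying the S-property. Then for all $(P,F),(P',F')\in\overline{X}$, $$\overline{\tau}((P,F),(P',F'))>0\iff F\cap P'\neq\emptyset.$$
   Context: A Lorentzian metric space $(X,\sigma,\tau)$ is a topological space with $\tau:X\times X\to[0,\infty]$ lower semicontinuous and satisfying $\tau(x,z)\geq\tau(x,y)+\tau(y,z)$ whenever $\tau(x,y),\tau(y,z)>0$. Write $x\ll y$ iff $\tau(x,y)>0$, $I^+(x)=\{y:x\ll y\}$, $I^-(x)=\{y:y\ll x\}$, $I^\pm[A]=\bigcup_{a\in A}I^\pm(a)$. Future (resp. past) chain: $x_n\ll x_{n+1}$ (resp. $x_{n+1}\ll x_n$) for all $n$. Separable: there is a countable $S$ with $x\ll y\Rightarrow\exists s\in S$, $x\ll s\ll y$. Chronologically dense: every $x$ with $I^-(x)\neq\emptyset$ (resp. $I^+(x)\neq\emptyset$) is the $\sigma$-limit of a future (resp. past) chain. Past set: $P=I^-[P]$; $\downarrow S=I^-[\{p:p\ll q\ \forall q\in S\}]$; IP: past set not the union of two proper past subsets; PIP: IP of the form $I^-(p)$; future sets, $\uparrow S$, IF, PIF dually. For nonempty IP $P$ and IF $F$, $P\sim_S F$ iff $P$ is a maximal IP in $\downarrow F$ and $F$ a maximal IF in $\uparrow P$; $P\sim_S\emptyset$ (resp. $\emptyset\sim_S F$) if the nonempty $P$ (resp. $F$) is S-related to no nonempty IF (resp. IP). S-property: for every $x$, $I^-(x)\sim_S I^+(x)$, and no PIF other than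 $I^+(x)$ (resp. PIP other than $I^-(x)$) is S-related to $I^-(x)$ (resp. $I^+(x)$). c-completion $\overline X=\{(P,F):P\sim_S F\}$. $\overline\tau((P,F),(P',F'))=0$ if $F=\emptyset$ or $P'=\emptyset$, and otherwise $\lim_n\tau(q_n,p'_n)$ for any past chain $\{q_n\}$ with $I^+[\{q_n\}]=F$ and any future chain $\{p'_n\}$ with $I^-[\{p'_n\}]=P'$ (well defined). *)

theory Defs
  imports "HOL-Analysis.Analysis" "HOL-Library.Extended_Nonnegative_Real"
begin

definition lorentzian_metric_space :: "'a topology \<Rightarrow> ('a \<Rightarrow> 'a \<Rightarrow> ennreal) \<Rightarrow> bool" where
  "lorentzian_metric_space \<sigma> \<tau> \<longleftrightarrow>
     topspace \<sigma> = UNIV \<and>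
     (\<forall>c. openin (prod_topology \<sigma> \<sigma>) {z. c < \<tau> (fst z) (snd z)}) \<and>
     (\<forall>x y z. \<tau> x y > 0 \<and> \<tau> y z > 0 \<longrightarrow> \<tau> x z \<ge> \<tau> x y + \<tau> y z)"

definition chron :: "('a \<Rightarrow> 'a \<Rightarrow> ennreal) \<Rightarrow> 'a \<Rightarrow> 'a \<Rightarrow> bool" where
  "chron \<tau> x y \<longleftrightarrow> \<tau> x y > 0"

definition Ifut :: "('a \<Rightarrow> 'a \<Rightarrow> ennreal) \<Rightarrow> 'a \<Rightarrow> 'a set" where
  "Ifut \<tau> x = {y. chron \<tau> x y}"

definition Ipast :: "('a \<Rightarrow> 'a \<Rightarrow> ennreal) \<Rightarrow> 'a \<Rightarrow> 'a set" where
  "Ipast \<tau> x = {y. chron \<tau> y x}"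

definition IfutS :: "('a \<Rightarrow> 'a \<Rightarrow> ennreal) \<Rightarrow> 'a set \<Rightarrow> 'a set" where
  "IfutS \<tau> A = (\<Union>a\<in>A. Ifut \<tau> a)"

definition IpastS :: "('a \<Rightarrow> 'a \<Rightarrow> ennreal) \<Rightarrow> 'a set \<Rightarrow> 'a set" where
  "IpastS \<tau> A = (\<Union>a\<in>A. Ipast \<tau> a)"

definition future_chain :: "('a \<Rightarrow> 'a \<Rightarrow> ennreal) \<Rightarrow> (nat \<Rightarrow> 'a) \<Rightarrow> bool" where
  "future_chain \<tau> s \<longleftrightarrow> (\<forall>n. chron \<tau> (s n) (s (Suc n)))"

definition past_chain :: "('a \<Rightarrow> 'a \<Rightarrow> ennreal) \<Rightarrow> (nat \<Rightarrow> 'a) \<Rightarrow> bool" where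
  "past_chain \<tau> s \<longleftrightarrow> (\<forall>n. chron \<tau> (s (Suc n)) (s n))"

definition lms_separable :: "('a \<Rightarrow> 'a \<Rightarrow> ennreal) \<Rightarrow> bool" where
  "lms_separable \<tau> \<longleftrightarrow>
     (\<exists>S. countable S \<and> (\<forall>x y. chron \<tau> x y \<longrightarrow> (\<exists>s\<in>S. chron \<tau> x s \<and> chron \<tau> s y)))"

definition chron_dense :: "'a topology \<Rightarrow> ('a \<Rightarrow> 'a \<Rightarrow> ennreal) \<Rightarrow> bool" where
  "chron_dense \<sigma> \<tau> \<longleftrightarrow>
     (\<forall>x. (Ipast \<tau> x \<noteq> {} \<longrightarrow> (\<exists>s. future_chain \<tau> s \<and> limitin \<sigma> s x sequentially)) \<and>
          (Ifut \<tau> x \<noteq> {} \<longrightarrow> (\<exists>s. past_chain \<tau> s \<and> limitin \<sigma> s x sequentially)))"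

definition past_set :: "('a \<Rightarrow> 'a \<Rightarrow> ennreal) \<Rightarrow> 'a set \<Rightarrow> bool" where
  "past_set \<tau> P \<longleftrightarrow> P = IpastS \<tau> P"

definition future_set :: "('a \<Rightarrow> 'a \<Rightarrow> ennreal) \<Rightarrow> 'a set \<Rightarrow> bool" where
  "future_set \<tau> F \<longleftrightarrow> F = IfutS \<tau> F"

definition down :: "('a \<Rightarrow> 'a \<Rightarrow> ennreal) \<Rightarrow> 'a set \<Rightarrow> 'a set" where
  "down \<tau> S = IpastS \<tau> {p. \<forall>q\<in>S. chron \<tau> p q}"

definition up :: "('a \<Rightarrow> 'a \<Rightarrow> ennreal) \<Rightarrow> 'a set \<Rightarrow> 'a set" where
  "up \<tau> S = IfutS \<tau> {p. \<forall>q\<in>S. chron \<tau> q p}"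

definition IP :: "('a \<Rightarrow> 'a \<Rightarrow> ennreal) \<Rightarrow> 'a set \<Rightarrow> bool" where
  "IP \<tau> P \<longleftrightarrow> past_set \<tau> P \<and>
     \<not> (\<exists>A B. past_set \<tau> A \<and> past_set \<tau> B \<and> A \<subset> P \<and> B \<subset> P \<and> P = A \<union> B)"

definition IF :: "('a \<Rightarrow> 'a \<Rightarrow> ennreal) \<Rightarrow> 'a set \<Rightarrow> bool" where
  "IF \<tau> F \<longleftrightarrow> future_set \<tau> F \<and>
     \<not> (\<exists>A B. future_set \<tau> A \<and> future_set \<tau> B \<and> A \<subset> F \<and> B \<subset> F \<and> F = A \<union> B)"

definition PIP :: "('a \<Rightarrow> 'a \<Rightarrow> ennreal) \<Rightarrow> 'a set \<Rightarrow> bool" where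
  "PIP \<tau> P \<longleftrightarrow> IP \<tau> P \<and> (\<exists>p. P = Ipast \<tau> p)"

definition PIF :: "('a \<Rightarrow> 'a \<Rightarrow> ennreal) \<Rightarrow> 'a set \<Rightarrow> bool" where
  "PIF \<tau> F \<longleftrightarrow> IF \<tau> F \<and> (\<exists>p. F = Ifut \<tau> p)"

definition Srel_ne :: "('a \<Rightarrow> 'a \<Rightarrow> ennreal) \<Rightarrow> 'a set \<Rightarrow> 'a set \<Rightarrow> bool" where
  "Srel_ne \<tau> P F \<longleftrightarrow> P \<noteq> {} \<and> F \<noteq> {} \<and> IP \<tau> P \<and> IF \<tau> F \<and>
     P \<subseteq> down \<tau> F \<and> \<not> (\<exists>P'. IP \<tau> P' \<and> P \<subset> P' \<and> P' \<subseteq> down \<tau> F) \<and>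
     F \<subseteq> up \<tau> P \<and> \<not> (\<exists>F'. IF \<tau> F' \<and> F \<subset> F' \<and> F' \<subseteq> up \<tau> P)"

definition Srel :: "('a \<Rightarrow> 'a \<Rightarrow> ennreal) \<Rightarrow> 'a set \<Rightarrow> 'a set \<Rightarrow> bool" where
  "Srel \<tau> P F \<longleftrightarrow>
     (if P \<noteq> {} \<and> F \<noteq> {} then Srel_ne \<tau> P F
      else if P \<noteq> {} then IP \<tau> P \<and> \<not> (\<exists>F'. Srel_ne \<tau> P F')
      else if F \<noteq> {} then IF \<tau> F \<and> \<not> (\<exists>P'. Srel_ne \<tau> P' F)
      else False)"

definition S_property :: "('a \<Rightarrow> 'a \<Rightarrow> ennreal) \<Rightarrow> bool" where
  "S_property \<tau> \<longleftrightarrow>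
     (\<forall>x. Srel \<tau> (Ipast \<tau> x) (Ifut \<tau> x) \<and>
          (\<forall>F. PIF \<tau> F \<and> Srel \<tau> (Ipast \<tau> x) F \<longrightarrow> F = Ifut \<tau> x) \<and>
          (\<forall>P. PIP \<tau> P \<and> Srel \<tau> P (Ifut \<tau> x) \<longrightarrow> P = Ipast \<tau> x))"

definition c_completion :: "('a \<Rightarrow> 'a \<Rightarrow> ennreal) \<Rightarrow> ('a set \<times> 'a set) set" where
  "c_completion \<tau> = {(P, F). Srel \<tau> P F}"

text \<open>Extended time separation: computed along some (chosen) past chain generating F and
  some (chosen) future chain generating P'; the paper shows the value is independent of
  the choice.\<close>
definition tau_bar :: "('a \<Rightarrow> 'a \<Rightarrow> ennreal) \<Rightarrow> ('a set \<times> 'a set) \<Rightarrow> ('a set \<times> 'a set) \<Rightarrow> ennreal" where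
  "tau_bar \<tau> PF PF' =
     (let F = snd PF; P' = fst PF' in
      if F = {} \<or> P' = {} then 0
      else (let q = (SOME q. past_chain \<tau> q \<and> IfutS \<tau> (range q) = F);
                p = (SOME p. future_chain \<tau> p \<and> IpastS \<tau> (range p) = P')
            in lim (\<lambda>n. \<tau> (q n) (p n))))"

end

theory Submission
  imports Defs
begin

text \<open>Separability lets every nonempty IF be generated as F = I+[{q n}] by a past chain q,
  and dually every nonempty IP as I-[{p n}] by a future chain p: an IF is directed downwards,
  so one can descend through F below an enumeration of the countably many interpolating
  points lying in F. By the reverse triangle inequality n \<mapsto> \<tau>(q n, p n) is increasing,
  so its limit is its supremum, which is positive iff some q n \<ll> p n, i.e. iff some point
  of F lies in P'.\<close>

lemma tau_le_reverse_triangle: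
  assumes "lorentzian_metric_space \<sigma> \<tau>" and "chron \<tau> x y" and "chron \<tau> y z"
  shows "\<tau> x y \<le> \<tau> x z" and "\<tau> y z \<le> \<tau> x z"
proof -
  have "\<tau> x y + \<tau> y z \<le> \<tau> x z"
    using assms unfolding lorentzian_metric_space_def chron_def by blast
  then show "\<tau> x y \<le> \<tau> x z" and "\<tau> y z \<le> \<tau> x z"
    by (auto intro: order_trans[rotated] add_increasing add_increasing2)
qed

lemma transp_chron:
  assumes "lorentzian_metric_space \<sigma> \<tau>"
  shows "transp (chron \<tau>)"
proof (rule transpI)
  fix x y z assume "chron \<tau> x y" "chron \<tau> y z"
  then show "chron \<tau> x z"
    using tau_le_reverse_triangle(1)[OF assms] unfolding chron_def by (meson less_le_trans)
qed

definition time_dual :: "('a \<Rightarrow> 'a \<Rightarrow> ennreal) \<Rightarrow> 'a \<Rightarrow> 'a \<Rightarrow> ennreal" where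
  "time_dual \<tau> x y = \<tau> y x"

lemma chron_time_dual: "chron (time_dual \<tau>) = (chron \<tau>)\<inverse>\<inverse>"
  unfolding chron_def time_dual_def by (simp add: fun_eq_iff)

lemma IfutS_time_dual: "IfutS (time_dual \<tau>) A = IpastS \<tau> A"
  unfolding IfutS_def Ifut_def IpastS_def Ipast_def chron_time_dual by auto

lemma IF_time_dual: "IF (time_dual \<tau>) P = IP \<tau> P"
  unfolding IF_def IP_def future_set_def past_set_def IfutS_time_dual ..

lemma past_chain_time_dual: "past_chain (time_dual \<tau>) p = future_chain \<tau> p"
  unfolding past_chain_def future_chain_def chron_time_dual by simp

lemma lms_separable_time_dual: "lms_separable (time_dual \<tau>) = lms_separable \<tau>"
  unfolding lms_separable_def chron_time_dual conversep_iff by blast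

lemma future_set_IfutS:
  assumes "transp (chron \<tau>)" and "lms_separable \<tau>"
  shows "future_set \<tau> (IfutS \<tau> A)"
proof -
  obtain S where interp: "\<And>x y. chron \<tau> x y \<Longrightarrow> \<exists>s\<in>S. chron \<tau> x s \<and> chron \<tau> s y"
    using assms(2) unfolding lms_separable_def by blast
  show ?thesis unfolding future_set_def
  proof
    show "IfutS \<tau> A \<subseteq> IfutS \<tau> (IfutS \<tau> A)"
    proof
      fix y assume "y \<in> IfutS \<tau> A"
      then obtain a where "a \<in> A" "chron \<tau> a y" unfolding IfutS_def Ifut_def by blast
      with interp obtain s where "chron \<tau> a s" "chron \<tau> s y" by blast
      with \<open>a \<in> A\<close> show "y \<in> IfutS \<tau> (IfutS \<tau> A)" unfolding IfutS_def Ifut_def by blast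
    qed
    show "IfutS \<tau> (IfutS \<tau> A) \<subseteq> IfutS \<tau> A"
      using assms(1) unfolding IfutS_def Ifut_def by (blast dest: transpD)
  qed
qed

lemma IfutS_mono: "A \<subseteq> B \<Longrightarrow> IfutS \<tau> A \<subseteq> IfutS \<tau> B"
  unfolding IfutS_def by blast

lemma IfutS_Un: "IfutS \<tau> (A \<union> B) = IfutS \<tau> A \<union> IfutS \<tau> B"
  unfolding IfutS_def by (rule UN_Un)

lemma IF_Un_eq:
  assumes "IF \<tau> F" and "future_set \<tau> A" and "future_set \<tau> B" and "F = A \<union> B"
  shows "A = F \<or> B = F"
proof (rule ccontr)
  assume "\<not> (A = F \<or> B = F)"
  then have "A \<subset> F" and "B \<subset> F" using assms(4) by auto
  with assms show False unfolding IF_def by blast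
qed

lemma IF_directed:
  assumes "transp (chron \<tau>)" and "lms_separable \<tau>" and "IF \<tau> F"
    and "x \<in> F" and "y \<in> F"
  shows "\<exists>z\<in>F. chron \<tau> z x \<and> chron \<tau> z y"
proof -
  have F: "IfutS \<tau> F = F" using \<open>IF \<tau> F\<close> unfolding IF_def future_set_def by simp
  \<comment> \<open>F is the future of its points below x together with the future of its other points;
    irreducibility forces the first part to be all of F.\<close>
  define F1 where "F1 = IfutS \<tau> (F \<inter> Ipast \<tau> x)"
  define F2 where "F2 = IfutS \<tau> (F - Ipast \<tau> x)"
  have "F = F1 \<union> F2"
    unfolding F1_def F2_def IfutS_Un[symmetric] Int_Diff_Un F ..
  then have "F1 = F \<or> F2 = F"
    using IF_Un_eq[OF \<open>IF \<tau> F\<close>] future_set_IfutS[OF assms(1,2)] unfolding F1_def F2_def by blast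
  moreover have "x \<notin> F2" unfolding F2_def IfutS_def Ifut_def Ipast_def by blast
  ultimately have "y \<in> F1" using assms(4,5) by blast
  then show ?thesis unfolding F1_def IfutS_def Ifut_def Ipast_def by blast
qed

lemma directed_past_chain_below:
  assumes directed: "\<And>x y. x \<in> F \<Longrightarrow> y \<in> F \<Longrightarrow> \<exists>z\<in>F. chron \<tau> z x \<and> chron \<tau> z y"
    and "range e \<subseteq> F"
  shows "\<exists>q. past_chain \<tau> q \<and> (\<forall>n. q n \<in> F \<and> chron \<tau> (q n) (e n))"
proof -
  have "\<exists>q. \<forall>n. (q n \<in> F \<and> chron \<tau> (q n) (e n)) \<and> chron \<tau> (q (Suc n)) (q n)"
  proof (rule dependent_nat_choice)
    show "\<exists>z. z \<in> F \<and> chron \<tau> z (e 0)"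
      using directed[of "e 0" "e 0"] \<open>range e \<subseteq> F\<close> by blast
  next
    fix z n assume "z \<in> F \<and> chron \<tau> z (e n)"
    then show "\<exists>z'. (z' \<in> F \<and> chron \<tau> z' (e (Suc n))) \<and> chron \<tau> z' z"
      using directed[of z "e (Suc n)"] \<open>range e \<subseteq> F\<close> by blast
  qed
  then show ?thesis unfolding past_chain_def by blast
qed

lemma IF_eq_IfutS_past_chain:
  assumes "transp (chron \<tau>)" and "lms_separable \<tau>" and "IF \<tau> F" and "F \<noteq> {}"
  obtains q where "past_chain \<tau> q" and "IfutS \<tau> (range q) = F"
proof -
  obtain S where "countable S"
    and interp: "\<And>x y. chron \<tau> x y \<Longrightarrow> \<exists>s\<in>S. chron \<tau> x s \<and> chron \<tau> s y"
    using \<open>lms_separable \<tau>\<close> unfolding lms_separable_def by blast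
  have F: "IfutS \<tau> F = F" using \<open>IF \<tau> F\<close> unfolding IF_def future_set_def by simp
  have interpolant: "\<exists>s\<in>S \<inter> F. chron \<tau> s x" if "x \<in> F" for x
  proof -
    have "x \<in> IfutS \<tau> F" using \<open>x \<in> F\<close> F by simp
    then obtain a where "a \<in> F" "chron \<tau> a x" unfolding IfutS_def Ifut_def by blast
    with interp obtain s where "s \<in> S" "chron \<tau> a s" "chron \<tau> s x" by blast
    moreover have "s \<in> IfutS \<tau> F"
      using \<open>a \<in> F\<close> \<open>chron \<tau> a s\<close> unfolding IfutS_def Ifut_def by blast
    ultimately show ?thesis using F by blast
  qed
  define e where "e = from_nat_into (S \<inter> F)"
  have "S \<inter> F \<noteq> {}" using interpolant \<open>F \<noteq> {}\<close> by blast
  then have range_e: "range e = S \<inter> F"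
    unfolding e_def using \<open>countable S\<close> by (simp add: range_from_nat_into)
  have "range e \<subseteq> F" using range_e by simp
  with IF_directed[OF assms(1-3)]
  have "\<exists>q. past_chain \<tau> q \<and> (\<forall>n. q n \<in> F \<and> chron \<tau> (q n) (e n))"
    by (rule directed_past_chain_below)
  then obtain q where q: "past_chain \<tau> q"
    and qF: "\<And>n. q n \<in> F" and below: "\<And>n. chron \<tau> (q n) (e n)"
    by blast
  have "IfutS \<tau> (range q) = F"
  proof
    have "IfutS \<tau> (range q) \<subseteq> IfutS \<tau> F" using qF by (intro IfutS_mono) blast
    then show "IfutS \<tau> (range q) \<subseteq> F" unfolding F .
  next
    show "F \<subseteq> IfutS \<tau> (range q)"
    proof
      fix x assume "x \<in> F"
      then obtain s where "s \<in> S \<inter> F" and "chron \<tau> s x" using interpolant by blast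
      then obtain k where "s = e k" using range_e by (metis rangeE)
      then have "chron \<tau> (q k) x"
        using below \<open>chron \<tau> s x\<close> \<open>transp (chron \<tau>)\<close> by (metis transpD)
      then show "x \<in> IfutS \<tau> (range q)" unfolding IfutS_def Ifut_def by blast
    qed
  qed
  with q show ?thesis by (rule that)
qed

lemma IP_eq_IpastS_future_chain:
  assumes "transp (chron \<tau>)" and "lms_separable \<tau>" and "IP \<tau> P" and "P \<noteq> {}"
  obtains p where "future_chain \<tau> p" and "IpastS \<tau> (range p) = P"
proof -
  have "transp (chron (time_dual \<tau>))" using assms(1) by (simp add: chron_time_dual)
  moreover have "lms_separable (time_dual \<tau>)" using assms(2) by (simp add: lms_separable_time_dual)
  moreover have "IF (time_dual \<tau>) P" using assms(3) by (simp add: IF_time_dual)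
  ultimately obtain p where "past_chain (time_dual \<tau>) p" and "IfutS (time_dual \<tau>) (range p) = P"
    using IF_eq_IfutS_past_chain \<open>P \<noteq> {}\<close> by blast
  then show ?thesis unfolding past_chain_time_dual IfutS_time_dual by (rule that)
qed

lemma past_chain_eventually_chron:
  assumes "transp (chron \<tau>)" and "past_chain \<tau> q" and "x \<in> IfutS \<tau> (range q)"
  shows "\<forall>\<^sub>F n in sequentially. chron \<tau> (q n) x"
proof -
  obtain m where "chron \<tau> (q m) x" using assms(3) unfolding IfutS_def Ifut_def by blast
  have "chron \<tau> (q n) x" if "m \<le> n" for n
    using that
  proof (induction rule: dec_induct)
    case base
    show ?case by fact
  next
    case (step n)
    have "chron \<tau> (q (Suc n)) (q n)" using \<open>past_chain \<tau> q\<close> unfolding past_chain_def ..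
    with step.IH show ?case using transpD[OF \<open>transp (chron \<tau>)\<close>] by blast
  qed
  then show ?thesis unfolding eventually_sequentially by blast
qed

lemma future_chain_eventually_chron:
  assumes "transp (chron \<tau>)" and "future_chain \<tau> p" and "x \<in> IpastS \<tau> (range p)"
  shows "\<forall>\<^sub>F n in sequentially. chron \<tau> x (p n)"
proof -
  have "transp (chron (time_dual \<tau>))" using assms(1) by (simp add: chron_time_dual)
  from past_chain_eventually_chron[OF this] assms(2,3) show ?thesis
    by (simp add: past_chain_time_dual IfutS_time_dual chron_time_dual)
qed

lemma incseq_tau_chains:
  assumes "lorentzian_metric_space \<sigma> \<tau>" and "past_chain \<tau> q" and "future_chain \<tau> p"
  shows "incseq (\<lambda>n. \<tau> (q n) (p n))"
proof (rule incseq_SucI)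
  fix n
  show "\<tau> (q n) (p n) \<le> \<tau> (q (Suc n)) (p (Suc n))"
  proof (cases "chron \<tau> (q n) (p n)")
    case True
    have q: "chron \<tau> (q (Suc n)) (q n)" and p: "chron \<tau> (p n) (p (Suc n))"
      using assms(2,3) unfolding past_chain_def future_chain_def by blast+
    have "\<tau> (q n) (p n) \<le> \<tau> (q (Suc n)) (p n)"
      using tau_le_reverse_triangle(2)[OF assms(1) q True] .
    also have "\<dots> \<le> \<tau> (q (Suc n)) (p (Suc n))"
      using tau_le_reverse_triangle(1)[OF assms(1) _ p] transp_chron[OF assms(1)] q True
      by (meson transpD)
    finally show ?thesis .
  qed (simp add: chron_def)
qed

lemma SUP_tau_chains_pos_iff:
  assumes "transp (chron \<tau>)" and "past_chain \<tau> q" and "future_chain \<tau> p"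
  shows "0 < (SUP n. \<tau> (q n) (p n)) \<longleftrightarrow> IfutS \<tau> (range q) \<inter> IpastS \<tau> (range p) \<noteq> {}"
proof
  assume "0 < (SUP n. \<tau> (q n) (p n))"
  then obtain n where "chron \<tau> (q n) (p n)" unfolding chron_def less_SUP_iff by blast
  moreover have "chron \<tau> (p n) (p (Suc n))" using assms(3) unfolding future_chain_def by blast
  ultimately have "p n \<in> IfutS \<tau> (range q) \<inter> IpastS \<tau> (range p)"
    unfolding IfutS_def Ifut_def IpastS_def Ipast_def by blast
  then show "IfutS \<tau> (range q) \<inter> IpastS \<tau> (range p) \<noteq> {}" by blast
next
  assume "IfutS \<tau> (range q) \<inter> IpastS \<tau> (range p) \<noteq> {}"
  then obtain x where "x \<in> IfutS \<tau> (range q)" and "x \<in> IpastS \<tau> (range p)" by blast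
  then have "\<forall>\<^sub>F n in sequentially. chron \<tau> (q n) x \<and> chron \<tau> x (p n)"
    by (intro eventually_conj past_chain_eventually_chron[OF assms(1,2)]
        future_chain_eventually_chron[OF assms(1,3)])
  then obtain N where "\<forall>n\<ge>N. chron \<tau> (q n) x \<and> chron \<tau> x (p n)"
    unfolding eventually_sequentially ..
  then have "chron \<tau> (q N) (p N)" using \<open>transp (chron \<tau>)\<close> by (meson order_refl transpD)
  then show "0 < (SUP n. \<tau> (q n) (p n))" unfolding chron_def less_SUP_iff by blast
qed

lemma c_completion_IF:
  assumes "(P, F) \<in> c_completion \<tau>" and "F \<noteq> {}"
  shows "IF \<tau> F"
  using assms unfolding c_completion_def Srel_def Srel_ne_def by (auto split: if_splits)

lemma c_completion_IP:
  assumes "(P, F) \<in> c_completion \<tau>" and "P \<noteq> {}"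
  shows "IP \<tau> P"
  using assms unfolding c_completion_def Srel_def Srel_ne_def by (auto split: if_splits)

lemma tau_bar_eq_SUP_chains:
  assumes "lorentzian_metric_space \<sigma> \<tau>" and "lms_separable \<tau>"
    and "IF \<tau> F" and "F \<noteq> {}" and "IP \<tau> P'" and "P' \<noteq> {}"
  obtains q p where "past_chain \<tau> q" and "IfutS \<tau> (range q) = F"
    and "future_chain \<tau> p" and "IpastS \<tau> (range p) = P'"
    and "tau_bar \<tau> (P, F) (P', F') = (SUP n. \<tau> (q n) (p n))"
proof -
  have trans: "transp (chron \<tau>)" using transp_chron[OF assms(1)] .
  define q where "q = (SOME q. past_chain \<tau> q \<and> IfutS \<tau> (range q) = F)"
  define p where "p = (SOME p. future_chain \<tau> p \<and> IpastS \<tau> (range p) = P')"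
  have "\<exists>q. past_chain \<tau> q \<and> IfutS \<tau> (range q) = F"
    using IF_eq_IfutS_past_chain[OF trans assms(2-4)] by blast
  then have q: "past_chain \<tau> q \<and> IfutS \<tau> (range q) = F"
    unfolding q_def by (rule someI_ex)
  have "\<exists>p. future_chain \<tau> p \<and> IpastS \<tau> (range p) = P'"
    using IP_eq_IpastS_future_chain[OF trans assms(2,5,6)] by blast
  then have p: "future_chain \<tau> p \<and> IpastS \<tau> (range p) = P'"
    unfolding p_def by (rule someI_ex)
  have "tau_bar \<tau> (P, F) (P', F') = lim (\<lambda>n. \<tau> (q n) (p n))"
    using assms(4,6) unfolding tau_bar_def q_def p_def Let_def by simp
  also have "\<dots> = (SUP n. \<tau> (q n) (p n))"
    using q p by (intro limI LIMSEQ_SUP incseq_tau_chains[OF assms(1)]) blast+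
  finally show ?thesis using that p q by blast
qed

theorem mainTheorem16:
  fixes \<sigma> :: "'a topology" and \<tau> :: "'a \<Rightarrow> 'a \<Rightarrow> ennreal"
  assumes "lorentzian_metric_space \<sigma> \<tau>"
    and "lms_separable \<tau>"
    and "chron_dense \<sigma> \<tau>"
    and "S_property \<tau>"
    and "(P, F) \<in> c_completion \<tau>"
    and "(P', F') \<in> c_completion \<tau>"
  shows "tau_bar \<tau> (P, F) (P', F') > 0 \<longleftrightarrow> F \<inter> P' \<noteq> {}"
proof (cases "F = {} \<or> P' = {}")
  case True
  then show ?thesis unfolding tau_bar_def by auto
next
  case False
  then have "IF \<tau> F" and "IP \<tau> P'"
    using c_completion_IF[OF assms(5)] c_completion_IP[OF assms(6)] by auto
  with False obtain q p where "past_chain \<tau> q" "IfutS \<tau> (range q) = F"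
    and "future_chain \<tau> p" "IpastS \<tau> (range p) = P'"
    and "tau_bar \<tau> (P, F) (P', F') = (SUP n. \<tau> (q n) (p n))"
    using tau_bar_eq_SUP_chains[OF assms(1,2)] by metis
  then show ?thesis
    using SUP_tau_chains_pos_iff[OF transp_chron[OF assms(1)]] by simp
qed

end
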